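(* For every positive integer $n$, $$E(n)=\sum_{d\mid n}\mu(d)\left(\left\lfloor\frac{n}{2d}\right\rfloor+1\right),$$ where $\mu$ is the Möbius function.
   Context: Define on triples of integers $\Gamma_{0,1}(\tau_1,\tau_2,\tau_3)=(\tau_2,\tau_3,\tau_2+\tau_3)$ and $\Gamma_{0,2}(\tau_1,\tau_2,\tau_3)=(\tau_1,\tau_3,\tau_1+\tau_3)$. The $(1,0)$-Euclid tree is the set of triples obtained from the root $(1,1,2)$ by finitely many (possibly zero) applications of $\Gamma_{0,1},\Gamma_{0,2}$. Define $E(1)=1$ and, for $n\ge2$, $E(n)$ as the number of distinct triples $T$ on the $(1,0)$-Euclid tree whose largest entry equals $n$. *)

theory Defs
  imports Complex_Main "HOL-Computational_Algebra.Squarefree"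
begin

definition Gamma01 :: "int \<times> int \<times> int \<Rightarrow> int \<times> int \<times> int" where
  "Gamma01 T = (case T of (t1, t2, t3) \<Rightarrow> (t2, t3, t2 + t3))"

definition Gamma02 :: "int \<times> int \<times> int \<Rightarrow> int \<times> int \<times> int" where
  "Gamma02 T = (case T of (t1, t2, t3) \<Rightarrow> (t1, t3, t1 + t3))"

inductive_set euclid_tree :: "(int \<times> int \<times> int) set" where
  root: "(1, 1, 2) \<in> euclid_tree"
| g1: "T \<in> euclid_tree \<Longrightarrow> Gamma01 T \<in> euclid_tree"
| g2: "T \<in> euclid_tree \<Longrightarrow> Gamma02 T \<in> euclid_tree"

definition max_entry :: "int \<times> int \<times> int \<Rightarrow> int" where
  "max_entry T = (case T of (a, b, c) \<Rightarrow> Max {a, b, c})"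

definition E :: "nat \<Rightarrow> nat" where
  "E n = (if n = 1 then 1
          else card {T \<in> euclid_tree. max_entry T = int n})"

definition moebius :: "nat \<Rightarrow> int" where
  "moebius n = (if squarefree n then (-1) ^ card (prime_factors n) else 0)"

end

theory Submission
  imports Defs
begin

text \<open>
  A triple lies on the tree exactly when it has the form (a, b, a + b) with 0 < a \<le> b and
  a, b coprime: the maps Gamma01 and Gamma02 preserve this shape, and conversely the subtractive
  Euclidean algorithm walks every such triple back to the root (1, 1, 2). Hence the triples with
  largest entry n correspond to the x \<le> n/2 coprime to n, and these are counted by Legendre's
  formula, i.e. by Moebius inversion over the divisors of n; the extra summand
  \<Sum>d|n. \<mu>(d) = [n = 1] accounts for the convention E(1) = 1.
\<close>

lemma coprime_add_self_right_int: "coprime (a::int) (a + b) \<longleftrightarrow> coprime a b"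
  by (simp add: coprime_iff_gcd_eq_1 gcd_add2)

lemma sum_Pow_minus_one_power_card:
  assumes "finite A"
  shows "(\<Sum>X\<in>Pow A. (-1::int) ^ card X) = (if A = {} then 1 else 0)"
proof -
  have "(\<Sum>X\<in>Pow A. (-1::int) ^ card X) = (\<Prod>x\<in>A. 1 - 1)"
    by (subst prod_diff_conv_sum[OF assms]) simp
  then show ?thesis
    using assms by (simp add: power_0_left card_eq_0_iff)
qed

lemma prod_prime_factors_squarefree:
  assumes "squarefree (d::nat)"
  shows "\<Prod>(prime_factors d) = d"
proof -
  have "d \<noteq> 0" using assms by (metis not_squarefree_0)
  have "\<Prod>(prime_factors d) = (\<Prod>p\<in>prime_factors d. p ^ multiplicity p d)"
    using assms \<open>d \<noteq> 0\<close> by (intro prod.cong) (auto simp: squarefree_factorial_semiring')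
  also have "\<dots> = d"
    using prod_prime_factors[OF \<open>d \<noteq> 0\<close>] by simp
  finally show ?thesis .
qed

lemma prime_factors_prod_primes:
  assumes "finite S" "\<And>p. p \<in> S \<Longrightarrow> prime (p::nat)"
  shows "prime_factors (\<Prod>S) = S"
proof -
  have "prime_factors (\<Prod>S) = (\<Union>p\<in>S. prime_factors p)"
  proof (subst prime_factors_prod)
    show "0 \<notin> (\<lambda>x. x) ` S"
      using assms(2) not_prime_0 by blast
  qed (use assms in auto)
  also have "\<dots> = S"
    using assms(2) by (auto simp: prime_prime_factors)
  finally show ?thesis .
qed

lemma bij_betw_Prod_squarefree_divisors:
  assumes "(k::nat) > 0"
  shows "bij_betw Prod (Pow (prime_factors k)) {d. d dvd k \<and> squarefree d}"
proof (rule bij_betw_byWitness[where f' = prime_factors])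
  show "\<forall>S\<in>Pow (prime_factors k). prime_factors (\<Prod>S) = S"
    by (auto intro!: prime_factors_prod_primes intro: finite_subset)
  show "\<forall>d\<in>{d. d dvd k \<and> squarefree d}. \<Prod>(prime_factors d) = d"
    by (auto intro: prod_prime_factors_squarefree)
  show "prime_factors ` {d. d dvd k \<and> squarefree d} \<subseteq> Pow (prime_factors k)"
    using assms dvd_prime_factors[of k] by auto
  show "Prod ` Pow (prime_factors k) \<subseteq> {d. d dvd k \<and> squarefree d}"
  proof clarify
    fix S assume S: "S \<subseteq> prime_factors k"
    have "\<Prod>S dvd \<Prod>(prime_factors k)"
      using S by (intro prod_dvd_prod_subset) auto
    also have "\<dots> dvd (\<Prod>p\<in>prime_factors k. p ^ multiplicity p k)"
      by (intro prod_dvd_prod) (auto simp: prime_factors_multiplicity)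
    also have "\<dots> = k"
      using prod_prime_factors[of k] assms by simp
    moreover have "\<And>p. p \<in> S \<Longrightarrow> prime p"
      using S by auto
    ultimately show "\<Prod>S dvd k \<and> squarefree (\<Prod>S)"
      by (auto intro!: squarefree_prod_coprime simp: primes_coprime squarefree_prime)
  qed
qed

lemma sum_moebius_divisors:
  assumes "(k::nat) > 0"
  shows "(\<Sum>d\<in>{d. d dvd k}. moebius d) = (if k = 1 then 1 else 0)"
proof -
  have "(\<Sum>d\<in>{d. d dvd k}. moebius d) = (\<Sum>d\<in>{d. d dvd k \<and> squarefree d}. moebius d)"
    using assms by (intro sum.mono_neutral_right) (auto simp: moebius_def)
  also have "\<dots> = (\<Sum>S\<in>Pow (prime_factors k). moebius (\<Prod>S))"
    by (rule sum.reindex_bij_betw[OF bij_betw_Prod_squarefree_divisors[OF assms], symmetric])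
  also have "\<dots> = (\<Sum>S\<in>Pow (prime_factors k). (-1) ^ card S)"
  proof (intro sum.cong refl)
    fix S assume "S \<in> Pow (prime_factors k)"
    then have "squarefree (\<Prod>S)" "prime_factors (\<Prod>S) = S"
      using bij_betw_Prod_squarefree_divisors[OF assms]
      by (auto dest: bij_betw_apply intro!: prime_factors_prod_primes intro: finite_subset)
    then show "moebius (\<Prod>S) = (-1) ^ card S"
      by (simp add: moebius_def)
  qed
  also have "\<dots> = (if k = 1 then 1 else 0)"
    using assms by (simp add: sum_Pow_minus_one_power_card prime_factorization_empty_iff)
  finally show ?thesis .
qed

lemma card_multiples_atLeastAtMost:
  assumes "(d::nat) > 0"
  shows "card {x\<in>{1..m}. d dvd x} = m div d"
proof -
  have "{x\<in>{1..m}. d dvd x} = (\<lambda>j. d * j) ` {1..m div d}"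
  proof (intro set_eqI iffI)
    fix x assume "x \<in> {x\<in>{1..m}. d dvd x}"
    then obtain j where "x = d * j" "1 \<le> x" "x \<le> m" by auto
    moreover have "j \<le> m div d"
      using \<open>x = d * j\<close> \<open>x \<le> m\<close> assms by (metis div_le_mono nonzero_mult_div_cancel_left not_gr0)
    ultimately show "x \<in> (\<lambda>j. d * j) ` {1..m div d}"
      by (auto intro!: Suc_leI)
  next
    fix x assume "x \<in> (\<lambda>j. d * j) ` {1..m div d}"
    then obtain j where "j \<in> {1..m div d}" "x = d * j" by blast
    then have "x = d * j" "1 \<le> j" "j \<le> m div d" by auto
    moreover have "d * (m div d) \<le> m" by simp
    ultimately show "x \<in> {x\<in>{1..m}. d dvd x}"
      using assms by (auto intro: order_trans[OF mult_le_mono2])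
  qed
  moreover have "inj_on (\<lambda>j. d * j) {1..m div d}"
    using assms by (auto simp: inj_on_def)
  ultimately show ?thesis by (simp add: card_image)
qed

lemma card_coprime_atLeastAtMost:
  assumes "(n::nat) > 0"
  shows "int (card {x\<in>{1..m}. coprime x n}) = (\<Sum>d\<in>{d. d dvd n}. moebius d * int (m div d))"
proof -
  have "int (card {x\<in>{1..m}. coprime x n}) = (\<Sum>x\<in>{1..m}. if coprime x n then 1 else 0)"
    by (simp add: sum.If_cases Int_def)
  also have "\<dots> = (\<Sum>x\<in>{1..m}. \<Sum>d\<in>{d\<in>{d. d dvd n}. d dvd x}. moebius d)"
  proof (intro sum.cong refl)
    fix x
    have "{d\<in>{d. d dvd n}. d dvd x} = {d. d dvd gcd x n}" by auto
    then show "(if coprime x n then 1 else 0) = (\<Sum>d\<in>{d\<in>{d. d dvd n}. d dvd x}. moebius d)"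
      using sum_moebius_divisors[of "gcd x n"] assms by (simp add: coprime_iff_gcd_eq_1)
  qed
  also have "\<dots> = (\<Sum>d\<in>{d. d dvd n}. \<Sum>x\<in>{x\<in>{1..m}. d dvd x}. moebius d)"
    using assms by (intro sum.swap_restrict) auto
  also have "\<dots> = (\<Sum>d\<in>{d. d dvd n}. moebius d * int (m div d))"
  proof (intro sum.cong refl)
    fix d assume "d \<in> {d. d dvd n}"
    then have "d > 0" using assms by (auto intro: Nat.gr0I)
    then show "(\<Sum>x\<in>{x\<in>{1..m}. d dvd x}. moebius d) = moebius d * int (m div d)"
      by (simp only: sum_constant card_multiples_atLeastAtMost of_nat_id) (simp add: mult.commute)
  qed
  finally show ?thesis .
qed

lemma euclid_tree_imp_coprime_pair:
  assumes "T \<in> euclid_tree"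
  shows "\<exists>a b. T = (a, b, a + b) \<and> 0 < a \<and> a \<le> b \<and> coprime a b"
  using assms
proof induction
  case root
  show ?case by auto
next
  case (g1 T)
  then obtain a b where "T = (a, b, a + b)" "0 < a" "a \<le> b" "coprime a b" by blast
  then show ?case
    by (intro exI[of _ b] exI[of _ "a + b"])
       (auto simp: Gamma01_def coprime_add_self_right_int add.commute[of a] coprime_commute)
next
  case (g2 T)
  then obtain a b where "T = (a, b, a + b)" "0 < a" "a \<le> b" "coprime a b" by blast
  then show ?case
    by (intro exI[of _ a] exI[of _ "a + b"]) (auto simp: Gamma02_def coprime_add_self_right_int)
qed

lemma coprime_pair_in_euclid_tree:
  fixes a b :: int
  assumes "0 < a" "a \<le> b" "coprime a b"
  shows "(a, b, a + b) \<in> euclid_tree"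
  using assms
proof (induction "nat b" arbitrary: a b rule: less_induct)
  case less
  have coprime_diff: "coprime a (b - a)"
    using less.prems(3) coprime_add_self_right_int[of a "b - a"] by simp
  consider "a = b" | "a < b" "b - a \<le> a" | "a < b" "a < b - a"
    using less.prems(2) by linarith
  then show ?case
  proof cases
    case 1
    then have "a = 1"
      using less.prems by (simp add: zdvd1_eq)
    then show ?thesis
      using 1 euclid_tree.root by simp
  next
    case 2
    have "(b - a, a, (b - a) + a) \<in> euclid_tree"
      using less 2 coprime_diff by (intro less.hyps) (auto simp: coprime_commute)
    from euclid_tree.g1[OF this] show ?thesis
      by (simp add: Gamma01_def)
  next
    case 3
    have "(a, b - a, a + (b - a)) \<in> euclid_tree"
      using less 3 coprime_diff by (intro less.hyps) auto
    from euclid_tree.g2[OF this] show ?thesis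
      by (simp add: Gamma02_def)
  qed
qed

lemma euclid_tree_iff:
  "T \<in> euclid_tree \<longleftrightarrow> (\<exists>a b. T = (a, b, a + b) \<and> 0 < a \<and> a \<le> b \<and> coprime a b)"
  using euclid_tree_imp_coprime_pair coprime_pair_in_euclid_tree by blast

lemma euclid_tree_max_entry_eq:
  "{T \<in> euclid_tree. max_entry T = int n}
     = (\<lambda>x. (int x, int n - int x, int n)) ` {x \<in> {1..n div 2}. coprime x n}"
proof (intro set_eqI iffI)
  fix T assume "T \<in> {T \<in> euclid_tree. max_entry T = int n}"
  then obtain a b where T: "T = (a, b, a + b)" "0 < a" "a \<le> b" "coprime a b" "a + b = int n"
    by (auto simp: euclid_tree_iff max_entry_def max_def)
  have "int (nat a) = a"
    using T(2) by simp
  moreover have "coprime a (int n)"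
    using T coprime_add_self_right_int[of a b] by simp
  ultimately have "coprime (nat a) n"
    by (metis coprime_int_iff)
  moreover have "nat a \<in> {1..n div 2}"
    using T by auto
  moreover have "T = (int (nat a), int n - int (nat a), int n)"
    using T by auto
  ultimately show "T \<in> (\<lambda>x. (int x, int n - int x, int n)) ` {x \<in> {1..n div 2}. coprime x n}"
    by blast
next
  fix T assume "T \<in> (\<lambda>x. (int x, int n - int x, int n)) ` {x \<in> {1..n div 2}. coprime x n}"
  then obtain x where x: "T = (int x, int n - int x, int n)" "x \<in> {1..n div 2}" "coprime x n"
    by blast
  then have "coprime (int x) (int n - int x)"
    using coprime_add_self_right_int[of "int x" "int n - int x"] by simp
  then have "T \<in> euclid_tree"
    using x by (auto simp: euclid_tree_iff)
  moreover have "max_entry T = int n"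
    using x by (auto simp: max_entry_def max_def)
  ultimately show "T \<in> {T \<in> euclid_tree. max_entry T = int n}"
    by blast
qed

lemma E_eq_card_coprime:
  "int (E n) = int (card {x \<in> {1..n div 2}. coprime x n}) + (if n = 1 then 1 else 0)"
proof (cases "n = 1")
  case False
  have "inj_on (\<lambda>x. (int x, int n - int x, int n)) A" for A
    by (auto simp: inj_on_def)
  then show ?thesis
    using False by (simp add: E_def euclid_tree_max_entry_eq card_image)
qed (simp add: E_def)

theorem corollary3p5:
  fixes n :: nat
  assumes "n \<ge> 1"
  shows "int (E n) = (\<Sum>d \<in> {d. d dvd n}. moebius d * (\<lfloor>real n / (2 * real d)\<rfloor> + 1))"
proof -
  have n: "n > 0" using assms by simp
  have floor_eq: "\<lfloor>real n / (2 * real d)\<rfloor> = int (n div 2 div d)" for d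
    using floor_divide_of_nat_eq[of n "2 * d"] by (simp add: div_mult2_eq)
  have "(\<Sum>d \<in> {d. d dvd n}. moebius d * (\<lfloor>real n / (2 * real d)\<rfloor> + 1))
      = (\<Sum>d \<in> {d. d dvd n}. moebius d * int (n div 2 div d)) + (\<Sum>d \<in> {d. d dvd n}. moebius d)"
    by (simp add: floor_eq distrib_left sum.distrib)
  also have "\<dots> = int (card {x \<in> {1..n div 2}. coprime x n}) + (if n = 1 then 1 else 0)"
    using card_coprime_atLeastAtMost[OF n] sum_moebius_divisors[OF n] by simp
  also have "\<dots> = int (E n)"
    by (rule E_eq_card_coprime[symmetric])
  finally show ?thesis ..
qed

end
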